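(* Let $(X,\mathbb{A},d)$ be a complete $C^*$-algebra valued metric space, where $\mathbb{A}$ is a unital $C^*$-algebra, and let $T:X\to X$ be a $C^*$-algebra valued Ćirić-type1 contractive mapping, i.e. for every $x,y\in X$ there is $q(x,y)\in\mathbb{A}$ with $0\le \|q(x,y)\|<1$, and there is a mapping $\delta:X\times X\to\mathbb{A}_+$, such that $$d(T^n x,T^n y)\preceq (q(x,y)^* )^n\,\delta(x,y)\,q(x,y)^n\quad\text{for all }x,y\in X,\ n\in\mathbb{N}.$$ Then $T$ is orbitally continuous on $X$ if and only if $T$ has a unique fixed point in $X$.
   Context: $\mathbb{A}$ denotes a unital $C^*$-algebra with unit $I$ and zero $\theta$. An element $a\in\mathbb{A}$ is positive, written $a\succeq\theta$, if $a^*=a$ and its spectrum is contained in $[0,\infty)$; $\mathbb{A}_+$ is the set of positive elements, and $a\succeq b$ means $a-b\succeq\theta$. A $C^*$-algebra valued metric space $(X,\mathbb{A},d)$ is a nonempty set $X$ with $d:X\times X\to\mathbb{A}$ such that for all $x,y,z\in X$: $d(x,y)\succeq\theta$, with $d(x,y)=\theta$ iff $x=y$; $d(x,y)=d(y,x)$; $d(x,y)\preceq d(x,z)+d(z,y)$. A sequence $\{x_n\}$ converges to $x$ if $\|d(x_n,x)\|\to0$, and is Cauchy if $\|d(x_n,x_m)\|\to0$ as $n,m\to\infty$; the space is complete if every Cauchy sequence converges to a point of $X$. A self-map $T$ of $X$ is orbitally continuous at $u\in X$ if for every $x\in X$ and every increasing sequence of positive integers $\{n_i\}$, $\|d(T^{n_i}x,u)\|\to0$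 implies $\|d(T^{n_i+1}x,Tu)\|\to0$ as $i\to\infty$; $T$ is orbitally continuous on $X$ if it is orbitally continuous at every $u\in X$. *)

theory Defs
  imports "HOL-Analysis.Analysis"
begin

class unital_cstar_algebra = real_normed_algebra_1 + banach +
  fixes scaleC :: "complex \<Rightarrow> 'a \<Rightarrow> 'a"
    and adj :: "'a \<Rightarrow> 'a"
  assumes scaleC_add_right: "scaleC c (a + b) = scaleC c a + scaleC c b"
    and scaleC_add_left: "scaleC (c + e) a = scaleC c a + scaleC e a"
    and scaleC_scaleC: "scaleC c (scaleC e a) = scaleC (c * e) a"
    and scaleC_of_real: "scaleC (complex_of_real r) a = scaleR r a"
    and scaleC_mult_left: "scaleC c a * b = scaleC c (a * b)"
    and scaleC_mult_right: "a * scaleC c b = scaleC c (a * b)"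
    and norm_scaleC: "norm (scaleC c a) = cmod c * norm a"
    and adj_adj: "adj (adj a) = a"
    and adj_add: "adj (a + b) = adj a + adj b"
    and adj_scaleC: "adj (scaleC c a) = scaleC (cnj c) (adj a)"
    and adj_mult: "adj (a * b) = adj b * adj a"
    and cstar_identity: "norm (adj a * a) = norm a ^ 2"

definition invertible_elem :: "'a::ring_1 \<Rightarrow> bool" where
  "invertible_elem a \<longleftrightarrow> (\<exists>b. a * b = 1 \<and> b * a = 1)"

definition cspectrum :: "'a::unital_cstar_algebra \<Rightarrow> complex set" where
  "cspectrum a = {z. \<not> invertible_elem (a - scaleC z 1)}"

definition cpositive :: "'a::unital_cstar_algebra \<Rightarrow> bool" where
  "cpositive a \<longleftrightarrow> adj a = a \<and> cspectrum a \<subseteq> complex_of_real ` {0..}"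

definition cle :: "'a::unital_cstar_algebra \<Rightarrow> 'a \<Rightarrow> bool" (infix "\<preceq>\<^sub>C" 50) where
  "a \<preceq>\<^sub>C b \<longleftrightarrow> cpositive (b - a)"

definition cstar_metric :: "('x \<Rightarrow> 'x \<Rightarrow> 'a::unital_cstar_algebra) \<Rightarrow> bool" where
  "cstar_metric d \<longleftrightarrow>
     (\<forall>x y. cpositive (d x y) \<and> (d x y = 0 \<longleftrightarrow> x = y)) \<and>
     (\<forall>x y. d x y = d y x) \<and>
     (\<forall>x y z. d x y \<preceq>\<^sub>C d x z + d z y)"

definition cconverges :: "('x \<Rightarrow> 'x \<Rightarrow> 'a::unital_cstar_algebra) \<Rightarrow> (nat \<Rightarrow> 'x) \<Rightarrow> 'x \<Rightarrow> bool" where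
  "cconverges d s x \<longleftrightarrow> (\<lambda>n. norm (d (s n) x)) \<longlonglongrightarrow> 0"

definition ccauchy :: "('x \<Rightarrow> 'x \<Rightarrow> 'a::unital_cstar_algebra) \<Rightarrow> (nat \<Rightarrow> 'x) \<Rightarrow> bool" where
  "ccauchy d s \<longleftrightarrow> (\<forall>e>0. \<exists>N. \<forall>n\<ge>N. \<forall>m\<ge>N. norm (d (s n) (s m)) < e)"

definition ccomplete :: "('x \<Rightarrow> 'x \<Rightarrow> 'a::unital_cstar_algebra) \<Rightarrow> bool" where
  "ccomplete d \<longleftrightarrow> (\<forall>s. ccauchy d s \<longrightarrow> (\<exists>x. cconverges d s x))"

definition orbitally_continuous_at ::
    "('x \<Rightarrow> 'x \<Rightarrow> 'a::unital_cstar_algebra) \<Rightarrow> ('x \<Rightarrow> 'x) \<Rightarrow> 'x \<Rightarrow> bool" where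
  "orbitally_continuous_at d T u \<longleftrightarrow>
     (\<forall>x (ns::nat \<Rightarrow> nat). strict_mono ns \<longrightarrow>
        cconverges d (\<lambda>i. (T ^^ ns i) x) u \<longrightarrow>
        cconverges d (\<lambda>i. (T ^^ (ns i + 1)) x) (T u))"

definition orbitally_continuous ::
    "('x \<Rightarrow> 'x \<Rightarrow> 'a::unital_cstar_algebra) \<Rightarrow> ('x \<Rightarrow> 'x) \<Rightarrow> bool" where
  "orbitally_continuous d T \<longleftrightarrow> (\<forall>u. orbitally_continuous_at d T u)"

end

theory Submission
  imports Defs
begin

text \<open>
  The analytic core is that the norm is monotone on positive elements: \<open>0 \<preceq> a \<preceq> b\<close> implies
  \<open>\<parallel>a\<parallel> \<le> \<parallel>b\<parallel>\<close>. This reduces to the fact that the norm of a self-adjoint \<open>h\<close> is bounded by any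
  bound on its spectrum, proved elementarily: if \<open>(1 - \<mu> h)\<^sup>-\<^sup>1\<close> existed for all \<open>\<bar>\<mu>\<bar> \<le> R\<close> with
  \<open>R \<parallel>h\<parallel> > 1\<close>, then by \<open>(1 - p\<^sup>2)\<^sup>-\<^sup>1 = ((1 - p)\<^sup>-\<^sup>1 + (1 + p)\<^sup>-\<^sup>1) / 2\<close> and a rotation of the disc,
  the maps \<open>\<mu> \<mapsto> (1 - \<mu>\<^sup>N h\<^sup>N)\<^sup>-\<^sup>1\<close>, \<open>N = 2\<^sup>k\<close>, would all be defined and uniformly
  equicontinuous on the disc; but \<open>\<parallel>(s h)\<^sup>N\<parallel> = (s \<parallel>h\<parallel>)\<^sup>N\<close> jumps from tiny to huge as \<open>s\<close> crosses
  \<open>1 / \<parallel>h\<parallel>\<close>, and the inverse cannot follow.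

  Monotonicity makes \<open>\<parallel>d x y\<parallel>\<close> a real metric with
  \<open>\<parallel>d (T\<^sup>n x) (T\<^sup>n y)\<parallel> \<le> \<parallel>\<delta> x y\<parallel> \<parallel>q x y\<parallel>\<^sup>2\<^sup>n\<close>. Hence orbits are Cauchy, fixed points are unique
  and attract every orbit. Orbital continuity makes the limit of an orbit a fixed point;
  conversely, a fixed point \<open>u\<close> is the limit of every orbit, so every convergent orbit
  subsequence tends to \<open>u = T u\<close>, and so does the shifted subsequence.
\<close>

lemma scaleC_zero_right [simp]: "scaleC c (0::'a::unital_cstar_algebra) = 0"
  using scaleC_add_right[of c "0::'a" 0] by simp

lemma scaleC_zero_left [simp]: "scaleC 0 (a::'a::unital_cstar_algebra) = 0"
  using scaleC_add_left[of 0 0 a] by simp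

lemma scaleC_one_left [simp]: "scaleC 1 (a::'a::unital_cstar_algebra) = a"
  using scaleC_of_real[of 1 a] by simp

lemma scaleC_minus_left: "scaleC (- c) (a::'a::unital_cstar_algebra) = - scaleC c a"
  using scaleC_add_left[of c "- c" a] by (simp add: minus_unique)

lemma scaleC_minus_right: "scaleC c (- a::'a::unital_cstar_algebra) = - scaleC c a"
  using scaleC_add_right[of c a "- a"] by (simp add: minus_unique)

lemma scaleC_diff_left: "scaleC (c - e) (a::'a::unital_cstar_algebra) = scaleC c a - scaleC e a"
  using scaleC_add_left[of c "- e" a] by (simp add: scaleC_minus_left)

lemma scaleC_diff_right: "scaleC c (a - b::'a::unital_cstar_algebra) = scaleC c a - scaleC c b"
  using scaleC_add_right[of c a "- b"] by (simp add: scaleC_minus_right)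

lemma adj_one [simp]: "adj (1::'a::unital_cstar_algebra) = 1"
  using adj_mult[of "adj 1" "1::'a"] by (simp add: adj_adj)

lemma adj_minus: "adj (- a::'a::unital_cstar_algebra) = - adj a"
proof -
  have "adj (0::'a) = 0" using adj_add[of 0 0] by simp
  then have "adj a + adj (- a) = 0" using adj_add[of a "- a"] by simp
  from minus_unique[OF this] show ?thesis by simp
qed

lemma adj_diff: "adj (a - b::'a::unital_cstar_algebra) = adj a - adj b"
  using adj_add[of a "- b"] by (simp add: adj_minus)

lemma adj_scaleR: "adj (scaleR r a::'a::unital_cstar_algebra) = scaleR r (adj a)"
  using adj_scaleC[of "complex_of_real r" a] by (simp add: scaleC_of_real)

lemma adj_power: "adj ((a::'a::unital_cstar_algebra) ^ n) = adj a ^ n"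
  by (induction n) (auto simp: adj_mult power_commutes)

lemma norm_adj: "norm (adj (a::'a::unital_cstar_algebra)) = norm a"
proof -
  have le: "norm b \<le> norm (adj b)" for b :: 'a
  proof (cases "b = 0")
    case False
    have "norm b ^ 2 \<le> norm (adj b) * norm b"
      using cstar_identity[of b] norm_mult_ineq[of "adj b" b] by simp
    then show ?thesis using False by (simp add: power2_eq_square)
  qed simp
  show ?thesis using le[of a] le[of "adj a"] by (simp add: adj_adj)
qed

section \<open>Inverses in Banach algebras\<close>

definition elem_inverse :: "'a::ring_1 \<Rightarrow> 'a" where
  "elem_inverse a = (SOME b. a * b = 1 \<and> b * a = 1)"

lemma elem_inverse_mult:
  assumes "invertible_elem a"
  shows "a * elem_inverse a = 1" and "elem_inverse a * a = 1"
  using someI_ex[OF assms[unfolded invertible_elem_def]] unfolding elem_inverse_def by auto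

lemma invertible_elemI: "a * b = 1 \<Longrightarrow> b * a = 1 \<Longrightarrow> invertible_elem a"
  unfolding invertible_elem_def by blast

lemma elem_inverse_unique:
  assumes "a * b = 1" and "b * a = 1"
  shows "elem_inverse a = b"
proof -
  have "elem_inverse a = (b * a) * elem_inverse a" using assms by simp
  also have "\<dots> = b"
    using elem_inverse_mult(1)[OF invertible_elemI[OF assms]] by (simp add: mult.assoc)
  finally show ?thesis .
qed

lemma invertible_elem_minus_iff: "invertible_elem (- a) \<longleftrightarrow> invertible_elem a"
  unfolding invertible_elem_def by (metis minus_minus mult_minus_left mult_minus_right)

lemma invertible_elem_scaleC:
  fixes a :: "'a::unital_cstar_algebra"
  assumes "c \<noteq> 0" and "invertible_elem a"
  shows "invertible_elem (scaleC c a)"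
  using assms elem_inverse_mult[OF assms(2)]
  by (intro invertible_elemI[of _ "scaleC (1 / c) (elem_inverse a)"])
    (simp_all add: scaleC_mult_left scaleC_mult_right scaleC_scaleC)

lemma neumann_series:
  fixes y :: "'a::{real_normed_algebra_1, banach}"
  assumes y: "norm y < 1"
  shows "invertible_elem (1 - y)"
    and "norm (elem_inverse (1 - y) - 1) \<le> norm y / (1 - norm y)"
proof -
  have s: "summable (\<lambda>n. y ^ n)" by (rule complete_algebra_summable_geometric[OF y])
  have sn: "summable (\<lambda>n. norm y ^ n)" using y by (simp add: summable_geometric)
  define S where "S = (\<Sum>n. y ^ n)"
  have tail: "(\<Sum>n. y ^ Suc n) = S - 1"
    unfolding S_def using suminf_split_head[OF s] by simp
  have "y * S = S - 1" unfolding S_def using suminf_mult[OF s, of y] tail S_def by simp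
  then have right: "(1 - y) * S = 1" by (simp add: algebra_simps)
  have "S * y = S - 1" unfolding S_def using suminf_mult2[OF s, of y] tail S_def
    by (simp add: power_commutes)
  then have left: "S * (1 - y) = 1" by (simp add: algebra_simps)
  show "invertible_elem (1 - y)" using right left by (rule invertible_elemI)
  have "norm (elem_inverse (1 - y) - 1) = norm (\<Sum>n. y ^ Suc n)"
    using elem_inverse_unique[OF right left] tail by simp
  also have "\<dots> \<le> (\<Sum>n. norm y ^ Suc n)"
    using sn by (intro norm_suminf_le norm_power_ineq) (simp add: summable_Suc_iff)
  also have "\<dots> = norm y / (1 - norm y)"
    using suminf_mult[OF sn, of "norm y"] suminf_geometric[of "norm y"] y by simp
  finally show "norm (elem_inverse (1 - y) - 1) \<le> norm y / (1 - norm y)" .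
qed

lemma divide_one_minus_le_double:
  fixes t :: real
  assumes "0 \<le> t" and "t \<le> 1/2"
  shows "t / (1 - t) \<le> 2 * t"
proof -
  have "t * (1 - 2 * t) \<ge> 0" using assms by simp
  then have "t \<le> 2 * t * (1 - t)" by (simp add: algebra_simps)
  then show ?thesis using assms by (simp add: pos_divide_le_eq)
qed

lemma invertible_elem_diff_small:
  fixes a e :: "'a::{real_normed_algebra_1, banach}"
  assumes a: "invertible_elem a" and small: "norm (elem_inverse a) * norm e \<le> 1/2"
  shows "invertible_elem (a - e)"
    and "norm (elem_inverse (a - e) - elem_inverse a) \<le> 2 * norm (elem_inverse a) ^ 2 * norm e"
proof -
  define b where "b = elem_inverse a"
  have ab: "a * b = 1" "b * a = 1" using elem_inverse_mult[OF a] b_def by auto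
  have be: "norm (b * e) \<le> 1/2"
    using norm_mult_ineq[of b e] small unfolding b_def by linarith
  then have inv: "invertible_elem (1 - b * e)"
    and w_near: "norm (elem_inverse (1 - b * e) - 1) \<le> norm (b * e) / (1 - norm (b * e))"
    using neumann_series[of "b * e"] by auto
  define w where "w = elem_inverse (1 - b * e)"
  have w: "(1 - b * e) * w = 1" "w * (1 - b * e) = 1" using elem_inverse_mult[OF inv] w_def by auto
  have factor: "a - e = a * (1 - b * e)" using ab by (simp add: algebra_simps mult.assoc[symmetric])
  have right: "(a - e) * (w * b) = 1" unfolding factor by (metis ab(1) mult.assoc mult_1_left w(1))
  have left: "(w * b) * (a - e) = 1" unfolding factor by (metis ab(2) mult.assoc mult_1_left w(2))
  show "invertible_elem (a - e)" using right left by (rule invertible_elemI)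
  have "norm (w - 1) \<le> 2 * norm (b * e)"
    using w_near divide_one_minus_le_double[of "norm (b * e)"] be unfolding w_def by simp
  also have "\<dots> \<le> 2 * (norm b * norm e)" using norm_mult_ineq[of b e] by simp
  finally have w_le: "norm (w - 1) \<le> 2 * (norm b * norm e)" .
  have "elem_inverse (a - e) - elem_inverse a = (w - 1) * b"
    using elem_inverse_unique[OF right left] b_def by (simp add: algebra_simps)
  then have "norm (elem_inverse (a - e) - elem_inverse a) \<le> norm (w - 1) * norm b"
    by (metis norm_mult_ineq)
  also have "\<dots> \<le> 2 * (norm b * norm e) * norm b" using w_le by (simp add: mult_right_mono)
  finally show "norm (elem_inverse (a - e) - elem_inverse a) \<le> 2 * norm (elem_inverse a) ^ 2 * norm e"
    unfolding b_def by (simp add: power2_eq_square algebra_simps)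
qed

lemma norm_le_of_elem_inverse_one_minus_near:
  fixes a :: "'a::{real_normed_algebra_1, banach}"
  assumes inv: "invertible_elem (1 - a)"
    and near: "norm (elem_inverse (1 - a) - 1) \<le> t" and t: "t < 1"
  shows "norm a \<le> t / (1 - t)"
proof -
  define w where "w = elem_inverse (1 - a)"
  have s: "norm (1 - w) \<le> t" using near unfolding w_def by (simp add: norm_minus_commute)
  then have t0: "0 \<le> t" using norm_ge_zero order_trans by blast
  then have "norm (elem_inverse (1 - (1 - w)) - 1) \<le> norm (1 - w) / (1 - norm (1 - w))"
    using neumann_series(2)[of "1 - w"] s t by simp
  also have "\<dots> \<le> t / (1 - t)" using s t t0 by (intro frac_le) auto
  finally have "norm (elem_inverse w - 1) \<le> t / (1 - t)" by simp
  moreover have "elem_inverse w = 1 - a"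
    using elem_inverse_mult[OF inv] unfolding w_def by (intro elem_inverse_unique) auto
  ultimately show ?thesis by simp
qed

lemma cspectrum_norm_bound:
  fixes a :: "'a::unital_cstar_algebra"
  assumes "z \<in> cspectrum a"
  shows "cmod z \<le> norm a"
proof (rule ccontr)
  assume "\<not> cmod z \<le> norm a"
  then have lt: "norm a < cmod z" and z: "z \<noteq> 0" by auto
  have "norm (scaleC (1 / z) a) < 1"
    using lt z by (simp add: norm_scaleC norm_divide divide_simps)
  then have "invertible_elem (1 - scaleC (1 / z) a)" by (rule neumann_series)
  moreover have "a - scaleC z 1 = scaleC (- z) (1 - scaleC (1 / z) a)"
    using z by (simp add: scaleC_diff_right scaleC_scaleC scaleC_minus_left)
  ultimately have "invertible_elem (a - scaleC z 1)"
    using z by (simp add: invertible_elem_scaleC)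
  then show False using assms unfolding cspectrum_def by simp
qed

lemma cspectrum_scaleR_one_diff_iff:
  fixes a :: "'a::unital_cstar_algebra"
  shows "z \<in> cspectrum (scaleR u 1 - a) \<longleftrightarrow> complex_of_real u - z \<in> cspectrum a"
proof -
  have "scaleR u 1 - a - scaleC z 1 = - (a - scaleC (complex_of_real u - z) 1)"
    by (simp add: scaleC_diff_left scaleC_of_real)
  then show ?thesis unfolding cspectrum_def using invertible_elem_minus_iff by (metis mem_Collect_eq)
qed

lemma cspectrum_add_scaleC_one:
  fixes h :: "'a::unital_cstar_algebra"
  assumes "z \<in> cspectrum h"
  shows "z + w \<in> cspectrum (h + scaleC w 1)"
proof -
  have shift: "h + scaleC w 1 - scaleC (z + w) 1 = h - scaleC z 1"
    by (simp add: scaleC_add_left algebra_simps)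
  have "\<not> invertible_elem (h + scaleC w 1 - scaleC (z + w) 1)"
    using assms unfolding cspectrum_def shift by simp
  then show ?thesis unfolding cspectrum_def by blast
qed

text \<open>
  Shifting \<open>h\<close> by \<open>i t\<close> moves a spectral point \<open>z\<close> to \<open>z + i t\<close>, while the C*-identity keeps
  \<open>\<parallel>h + i t\<parallel>\<^sup>2 \<le> \<parallel>h\<parallel>\<^sup>2 + t\<^sup>2\<close>; for \<open>Im z \<noteq> 0\<close> this fails for large \<open>t\<close> of the sign of \<open>Im z\<close>.
\<close>
lemma cspectrum_self_adjoint_real:
  fixes h :: "'a::unital_cstar_algebra"
  assumes sa: "adj h = h" and z: "z \<in> cspectrum h"
  shows "Im z = 0"
proof (rule ccontr)
  assume nz: "Im z \<noteq> 0"
  have shifted: "Re z ^ 2 + (Im z + t) ^ 2 \<le> norm h ^ 2 + t ^ 2" for t :: real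
  proof -
    define c where "c = scaleC (\<i> * complex_of_real t) (1::'a)"
    have "cmod (z + \<i> * complex_of_real t) \<le> norm (h + c)"
      unfolding c_def by (intro cspectrum_norm_bound cspectrum_add_scaleC_one z)
    then have "cmod (z + \<i> * complex_of_real t) ^ 2 \<le> norm (h + c) ^ 2"
      by (simp add: power_mono)
    moreover have "cmod (z + \<i> * complex_of_real t) ^ 2 = Re z ^ 2 + (Im z + t) ^ 2"
      by (simp add: cmod_power2)
    ultimately have spec: "Re z ^ 2 + (Im z + t) ^ 2 \<le> norm (h + c) ^ 2" by simp
    have hc: "h * c = c * h" unfolding c_def by (simp add: scaleC_mult_left scaleC_mult_right)
    have cc: "c * c = scaleR (- (t ^ 2)) 1"
    proof -
      have "c * c = scaleC ((\<i> * complex_of_real t) * (\<i> * complex_of_real t)) 1"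
        unfolding c_def by (simp add: scaleC_mult_left scaleC_mult_right scaleC_scaleC)
      also have "(\<i> * complex_of_real t) * (\<i> * complex_of_real t) = complex_of_real (- (t ^ 2))"
        by (simp add: power2_eq_square algebra_simps)
      finally show ?thesis by (simp only: scaleC_of_real)
    qed
    have "adj (h + c) * (h + c) = (h - c) * (h + c)"
      unfolding c_def by (simp add: adj_add adj_scaleC sa scaleC_minus_left)
    also have "\<dots> = h * h + scaleR (t ^ 2) 1"
      using hc cc by (simp add: algebra_simps)
    finally have "norm (h + c) ^ 2 = norm (h * h + scaleR (t ^ 2) 1)"
      using cstar_identity[of "h + c"] by simp
    also have "\<dots> \<le> norm h ^ 2 + t ^ 2"
      using norm_triangle_ineq[of "h * h" "scaleR (t ^ 2) (1::'a)"] norm_mult_ineq[of h h]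
      by (simp add: power2_eq_square)
    finally show ?thesis using spec by linarith
  qed
  define t where "t = (norm h ^ 2 + 1) / (2 * Im z)"
  have "Re z ^ 2 + Im z ^ 2 + 2 * Im z * t \<le> norm h ^ 2"
    using shifted[of t] by (simp add: power2_eq_square algebra_simps)
  moreover have "2 * Im z * t = norm h ^ 2 + 1" unfolding t_def using nz by simp
  ultimately show False by (smt (verit) zero_le_power2)
qed

lemma norm_power_two_power_self_adjoint:
  fixes h :: "'a::unital_cstar_algebra"
  assumes sa: "adj h = h"
  shows "norm (h ^ 2 ^ k) = norm h ^ 2 ^ k"
proof (induction k)
  case (Suc k)
  define y where "y = h ^ 2 ^ k"
  have "h ^ 2 ^ Suc k = adj y * y"
    unfolding y_def by (simp add: adj_power sa power_add[symmetric] mult_2)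
  then have "norm (h ^ 2 ^ Suc k) = norm y ^ 2" using cstar_identity[of y] by simp
  then show ?case using Suc y_def by (simp add: power_mult[symmetric] mult.commute)
qed simp

section \<open>Norm of a self-adjoint element versus its spectrum\<close>

lemma elem_inverse_one_minus_square:
  fixes p :: "'a::{real_normed_algebra_1, banach}"
  assumes "invertible_elem (1 - p)" and "invertible_elem (1 + p)"
  shows "invertible_elem (1 - p * p)"
    and "elem_inverse (1 - p * p) = scaleR (1/2) (elem_inverse (1 - p) + elem_inverse (1 + p))"
proof -
  define a b where "a = elem_inverse (1 - p)" and "b = elem_inverse (1 + p)"
  have a: "(1 - p) * a = 1" "a * (1 - p) = 1" and b: "(1 + p) * b = 1" "b * (1 + p) = 1"
    using elem_inverse_mult assms unfolding a_def b_def by blast+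
  have factors: "1 - p * p = (1 - p) * (1 + p)" "1 - p * p = (1 + p) * (1 - p)"
    by (simp_all add: algebra_simps)
  have "(1 - p * p) * a = 1 + p" "(1 - p * p) * b = 1 - p"
    using factors a(1) b(1) by (metis mult.assoc mult.right_neutral)+
  then have right: "(1 - p * p) * scaleR (1/2) (a + b) = 1"
    by (simp add: distrib_left scaleR_2[symmetric])
  have "a * (1 - p * p) = 1 + p" "b * (1 - p * p) = 1 - p"
    using factors a(2) b(2) by (metis mult.assoc mult_1_left)+
  then have left: "scaleR (1/2) (a + b) * (1 - p * p) = 1"
    by (simp add: distrib_right scaleR_2[symmetric])
  show "invertible_elem (1 - p * p)" using right left by (rule invertible_elemI)
  show "elem_inverse (1 - p * p) = scaleR (1/2) (a + b)" using right left by (rule elem_inverse_unique)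
qed

lemma continuous_on_elem_inverse_one_minus:
  fixes x :: "'a::unital_cstar_algebra"
  assumes inv: "\<And>\<mu>. cmod \<mu> \<le> R \<Longrightarrow> invertible_elem (1 - scaleC \<mu> x)"
  shows "continuous_on (cball 0 R) (\<lambda>\<mu>. elem_inverse (1 - scaleC \<mu> x))"
  unfolding continuous_on_iff
proof (intro ballI allI impI)
  fix \<mu>0 :: complex and \<epsilon> :: real
  assume "\<mu>0 \<in> cball 0 R" and \<epsilon>: "0 < \<epsilon>"
  define a where "a = 1 - scaleC \<mu>0 x"
  have ia: "invertible_elem a" using inv \<open>\<mu>0 \<in> cball 0 R\<close> a_def by simp
  define B where "B = norm (elem_inverse a) * norm x"
  have B: "0 \<le> B" unfolding B_def by simp
  define r where "r = min (1 / (2 * B + 1)) (\<epsilon> / (2 * norm (elem_inverse a) * B + 1))"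
  have r: "0 < r" unfolding r_def using B \<epsilon> by (simp add: add_nonneg_pos)
  have lt_of_lt_divide: "c * s < k" if "0 \<le> c" "0 \<le> s" "s < k / (c + 1)" "0 < k" for c s k :: real
  proof -
    have "c * s \<le> c * (k / (c + 1))" using that by (intro mult_left_mono) auto
    also have "\<dots> < k" using that by (simp add: field_simps)
    finally show ?thesis .
  qed
  show "\<exists>r>0. \<forall>\<mu>\<in>cball 0 R. dist \<mu> \<mu>0 < r \<longrightarrow>
          dist (elem_inverse (1 - scaleC \<mu> x)) (elem_inverse (1 - scaleC \<mu>0 x)) < \<epsilon>"
  proof (intro exI[of _ r] conjI ballI impI r)
    fix \<mu> assume "dist \<mu> \<mu>0 < r"
    define e where "e = scaleC (\<mu> - \<mu>0) x"
    have ne: "norm e = cmod (\<mu> - \<mu>0) * norm x" unfolding e_def by (simp add: norm_scaleC)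
    have "2 * B * cmod (\<mu> - \<mu>0) < 1"
      using \<open>dist \<mu> \<mu>0 < r\<close> B by (intro lt_of_lt_divide) (auto simp: r_def dist_norm)
    then have small: "norm (elem_inverse a) * norm e \<le> 1/2" using ne B_def by (simp add: algebra_simps)
    have "2 * norm (elem_inverse a) * B * cmod (\<mu> - \<mu>0) < \<epsilon>"
      using \<open>dist \<mu> \<mu>0 < r\<close> B \<epsilon> by (intro lt_of_lt_divide) (auto simp: r_def dist_norm)
    moreover have "norm (elem_inverse (a - e) - elem_inverse a) \<le> 2 * norm (elem_inverse a) ^ 2 * norm e"
      by (rule invertible_elem_diff_small(2)[OF ia small])
    moreover have "a - e = 1 - scaleC \<mu> x" unfolding a_def e_def by (simp add: scaleC_diff_left)
    ultimately show "dist (elem_inverse (1 - scaleC \<mu> x)) (elem_inverse (1 - scaleC \<mu>0 x)) < \<epsilon>"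
      unfolding dist_norm a_def[symmetric] B_def ne by (simp add: power2_eq_square algebra_simps)
  qed
qed

definition inverse_one_minus_modulus :: "real \<Rightarrow> real \<Rightarrow> (complex \<Rightarrow> 'a::real_normed_algebra_1) \<Rightarrow> bool"
  where "inverse_one_minus_modulus R \<delta> g \<longleftrightarrow>
    (\<forall>\<mu>. cmod \<mu> \<le> R \<longrightarrow> invertible_elem (1 - g \<mu>)) \<and>
    (\<forall>\<mu> \<mu>'. cmod \<mu> \<le> R \<longrightarrow> cmod \<mu>' \<le> R \<longrightarrow> cmod (\<mu> - \<mu>') < \<delta> \<longrightarrow>
       norm (elem_inverse (1 - g \<mu>) - elem_inverse (1 - g \<mu>')) < 1/2)"

lemma exists_inverse_one_minus_modulus:
  fixes x :: "'a::unital_cstar_algebra"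
  assumes inv: "\<And>\<mu>. cmod \<mu> \<le> R \<Longrightarrow> invertible_elem (1 - scaleC \<mu> x)"
  shows "\<exists>\<delta>>0. inverse_one_minus_modulus R \<delta> (\<lambda>\<mu>. scaleC \<mu> x)"
proof -
  have "uniformly_continuous_on (cball 0 R) (\<lambda>\<mu>. elem_inverse (1 - scaleC \<mu> x))"
    by (intro compact_uniformly_continuous continuous_on_elem_inverse_one_minus) (auto intro: inv)
  then obtain \<delta> where "\<delta> > 0" and uc: "\<And>\<mu> \<mu>'. \<mu> \<in> cball 0 R \<Longrightarrow> \<mu>' \<in> cball 0 R \<Longrightarrow>
      dist \<mu>' \<mu> < \<delta> \<Longrightarrow> dist (elem_inverse (1 - scaleC \<mu>' x)) (elem_inverse (1 - scaleC \<mu> x)) < 1/2"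
    unfolding uniformly_continuous_on_def by (metis zero_less_divide_1_iff zero_less_numeral)
  have "norm (elem_inverse (1 - scaleC \<mu> x) - elem_inverse (1 - scaleC \<mu>' x)) < 1/2"
    if "cmod \<mu> \<le> R" "cmod \<mu>' \<le> R" "cmod (\<mu> - \<mu>') < \<delta>" for \<mu> \<mu>'
    using uc[of \<mu>' \<mu>] that by (simp add: dist_norm)
  then show ?thesis using \<open>\<delta> > 0\<close> inv unfolding inverse_one_minus_modulus_def by blast
qed

lemma inverse_one_minus_modulus_square:
  fixes g :: "complex \<Rightarrow> 'a::{real_normed_algebra_1, banach}"
  assumes g: "inverse_one_minus_modulus R \<delta> g"
    and \<zeta>: "cmod \<zeta> = 1" and odd: "\<And>\<mu>. g (\<zeta> * \<mu>) = - g \<mu>"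
  shows "inverse_one_minus_modulus R \<delta> (\<lambda>\<mu>. g \<mu> * g \<mu>)"
proof -
  have inv: "invertible_elem (1 - g \<mu>)" if "cmod \<mu> \<le> R" for \<mu>
    using g that unfolding inverse_one_minus_modulus_def by blast
  have near: "norm (elem_inverse (1 - g \<mu>) - elem_inverse (1 - g \<mu>')) < 1/2"
    if "cmod \<mu> \<le> R" "cmod \<mu>' \<le> R" "cmod (\<mu> - \<mu>') < \<delta>" for \<mu> \<mu>'
    using g that unfolding inverse_one_minus_modulus_def by blast
  have rot: "cmod (\<zeta> * \<mu>) = cmod \<mu>" for \<mu> using \<zeta> by (simp add: norm_mult)
  have plus: "1 + g \<mu> = 1 - g (\<zeta> * \<mu>)" for \<mu> by (simp add: odd)
  have avg: "invertible_elem (1 - g \<mu> * g \<mu>) \<and> elem_inverse (1 - g \<mu> * g \<mu>)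
      = scaleR (1/2) (elem_inverse (1 - g \<mu>) + elem_inverse (1 - g (\<zeta> * \<mu>)))"
    if "cmod \<mu> \<le> R" for \<mu>
    using elem_inverse_one_minus_square[of "g \<mu>"] inv[of \<mu>] inv[of "\<zeta> * \<mu>"] that \<zeta>
    unfolding plus by (simp add: rot)
  have "norm (elem_inverse (1 - g \<mu> * g \<mu>) - elem_inverse (1 - g \<mu>' * g \<mu>')) < 1/2"
    if \<mu>: "cmod \<mu> \<le> R" "cmod \<mu>' \<le> R" "cmod (\<mu> - \<mu>') < \<delta>" for \<mu> \<mu>'
  proof -
    have "cmod (\<zeta> * \<mu> - \<zeta> * \<mu>') < \<delta>"
      using \<mu>(3) rot[of "\<mu> - \<mu>'"] by (simp add: right_diff_distrib)
    then have "norm (elem_inverse (1 - g (\<zeta> * \<mu>)) - elem_inverse (1 - g (\<zeta> * \<mu>'))) < 1/2"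
      using near \<mu> rot by simp
    moreover have "elem_inverse (1 - g \<mu> * g \<mu>) - elem_inverse (1 - g \<mu>' * g \<mu>') = scaleR (1/2)
        ((elem_inverse (1 - g \<mu>) - elem_inverse (1 - g \<mu>'))
         + (elem_inverse (1 - g (\<zeta> * \<mu>)) - elem_inverse (1 - g (\<zeta> * \<mu>'))))"
      using avg[OF \<mu>(1)] avg[OF \<mu>(2)] by (simp add: algebra_simps)
    ultimately show ?thesis
      using near[OF \<mu>] norm_triangle_ineq[of "elem_inverse (1 - g \<mu>) - elem_inverse (1 - g \<mu>')"
          "elem_inverse (1 - g (\<zeta> * \<mu>)) - elem_inverse (1 - g (\<zeta> * \<mu>'))"] by simp
  qed
  then show ?thesis using avg unfolding inverse_one_minus_modulus_def by blast
qed

lemma inverse_one_minus_modulus_power_two_power: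
  fixes x :: "'a::unital_cstar_algebra"
  assumes "inverse_one_minus_modulus R \<delta> (\<lambda>\<mu>. scaleC \<mu> x)"
  shows "inverse_one_minus_modulus R \<delta> (\<lambda>\<mu>. scaleC (\<mu> ^ 2 ^ k) (x ^ 2 ^ k))"
proof (induction k)
  case 0
  then show ?case using assms by simp
next
  case (Suc k)
  define \<zeta> :: complex where "\<zeta> = cis (pi / 2 ^ k)"
  have "\<zeta> ^ 2 ^ k = -1" unfolding \<zeta>_def by (subst Complex.DeMoivre) simp
  then have "scaleC ((\<zeta> * \<mu>) ^ 2 ^ k) (x ^ 2 ^ k) = - scaleC (\<mu> ^ 2 ^ k) (x ^ 2 ^ k)" for \<mu>
    by (simp add: power_mult_distrib scaleC_minus_left)
  moreover have "cmod \<zeta> = 1" unfolding \<zeta>_def by simp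
  ultimately have "inverse_one_minus_modulus R \<delta>
      (\<lambda>\<mu>. scaleC (\<mu> ^ 2 ^ k) (x ^ 2 ^ k) * scaleC (\<mu> ^ 2 ^ k) (x ^ 2 ^ k))"
    by (intro inverse_one_minus_modulus_square[OF Suc.IH])
  moreover have "scaleC (\<mu> ^ 2 ^ k) (x ^ 2 ^ k) * scaleC (\<mu> ^ 2 ^ k) (x ^ 2 ^ k)
      = scaleC (\<mu> ^ 2 ^ Suc k) (x ^ 2 ^ Suc k)" for \<mu>
    by (simp add: scaleC_mult_left scaleC_mult_right scaleC_scaleC power_mult[symmetric]
        power_add[symmetric] mult_2[symmetric] mult.commute)
  ultimately show ?case by simp
qed

lemma exists_bracket:
  fixes c R \<delta> :: real
  assumes "0 < c" "c < R" "0 < \<delta>"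
  shows "\<exists>s1 s2. 0 \<le> s1 \<and> s1 < c \<and> c < s2 \<and> s2 \<le> R \<and> s2 - s1 < \<delta>"
proof (intro exI conjI)
  show "0 \<le> max 0 (c - \<delta> / 3)" "max 0 (c - \<delta> / 3) < c" "c < min R (c + \<delta> / 3)"
    "min R (c + \<delta> / 3) \<le> R"
    using assms by simp_all
  have "c - \<delta> / 3 \<le> max 0 (c - \<delta> / 3)" "min R (c + \<delta> / 3) \<le> c + \<delta> / 3" by simp_all
  then show "min R (c + \<delta> / 3) - max 0 (c - \<delta> / 3) < \<delta>" using assms by linarith
qed

lemma exists_power_two_power_small_large:
  fixes r1 r2 :: real
  assumes "0 \<le> r1" "r1 < 1" "1 < r2"
  shows "\<exists>k. r1 ^ 2 ^ k < 1/5 \<and> 11 < r2 ^ 2 ^ k"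
proof -
  have "eventually (\<lambda>n. r1 ^ n < 1/5) sequentially"
    using assms by (intro order_tendstoD(2)[OF LIMSEQ_power_zero]) auto
  moreover have "eventually (\<lambda>n. 11 < r2 ^ n) sequentially"
  proof -
    have "filterlim (\<lambda>n. norm (r2 ^ n)) at_top sequentially"
      using assms by (intro filterlim_at_infinity_imp_norm_at_top filterlim_realpow_sequentially_gt1) simp
    then show ?thesis using assms by (simp add: filterlim_at_top_dense norm_power)
  qed
  ultimately have "eventually (\<lambda>n. r1 ^ n < 1/5 \<and> 11 < r2 ^ n) sequentially"
    by (rule eventually_conj)
  then obtain M where M: "\<And>n. n \<ge> M \<Longrightarrow> r1 ^ n < 1/5 \<and> 11 < r2 ^ n"
    unfolding eventually_sequentially by blast
  have "M \<le> 2 ^ M" by (simp add: less_exp less_imp_le)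
  then show ?thesis using M by blast
qed

lemma norm_le_of_invertible_one_minus_disc:
  fixes h :: "'a::unital_cstar_algebra"
  assumes sa: "adj h = h" and R: "0 < R"
    and inv: "\<And>\<mu>. cmod \<mu> \<le> R \<Longrightarrow> invertible_elem (1 - scaleC \<mu> h)"
  shows "R * norm h \<le> 1"
proof (rule ccontr)
  assume "\<not> R * norm h \<le> 1"
  then have Rh: "1 < R * norm h" and h: "0 < norm h"
    using R by (auto simp: zero_less_mult_iff)
  have "1 / norm h < R" using Rh h by (simp add: field_simps)
  obtain \<delta> where "\<delta> > 0" and \<delta>: "inverse_one_minus_modulus R \<delta> (\<lambda>\<mu>. scaleC \<mu> h)"
    using exists_inverse_one_minus_modulus[OF inv] by blast
  then obtain s1 s2 where s: "0 \<le> s1" "s1 < 1 / norm h" "1 / norm h < s2" "s2 \<le> R" "s2 - s1 < \<delta>"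
    using exists_bracket[of "1 / norm h" R \<delta>] h \<open>1 / norm h < R\<close> by auto
  have "0 \<le> s1 * norm h" "s1 * norm h < 1" "1 < s2 * norm h"
    using s h by (auto simp: field_simps)
  \<comment> \<open>\<open>\<parallel>a1\<parallel> < 1/5\<close> puts \<open>(1 - a1)\<^sup>-\<^sup>1\<close> within \<open>2/5\<close> of \<open>1\<close>, hence \<open>(1 - a2)\<^sup>-\<^sup>1\<close>
    within \<open>9/10\<close>, forcing \<open>\<parallel>a2\<parallel> \<le> 9 < 11\<close>.\<close>
  then obtain k where k: "(s1 * norm h) ^ 2 ^ k < 1/5" "11 < (s2 * norm h) ^ 2 ^ k"
    using exists_power_two_power_small_large by blast
  define a1 a2 where "a1 = scaleC (complex_of_real s1 ^ 2 ^ k) (h ^ 2 ^ k)"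
    and "a2 = scaleC (complex_of_real s2 ^ 2 ^ k) (h ^ 2 ^ k)"
  have norm_a: "norm a1 = (s1 * norm h) ^ 2 ^ k" "norm a2 = (s2 * norm h) ^ 2 ^ k"
    using norm_power_two_power_self_adjoint[OF sa, of k] s unfolding a1_def a2_def
    by (simp_all add: norm_scaleC norm_power power_mult_distrib)
  have "cmod (complex_of_real s1) \<le> R" "cmod (complex_of_real s2) \<le> R"
    "cmod (complex_of_real s2 - complex_of_real s1) < \<delta>"
    using s by (simp_all flip: of_real_diff)
  then have inv2: "invertible_elem (1 - a2)"
    and near12: "norm (elem_inverse (1 - a2) - elem_inverse (1 - a1)) < 1/2"
    using inverse_one_minus_modulus_power_two_power[OF \<delta>, of k]
    unfolding a1_def a2_def inverse_one_minus_modulus_def by blast+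
  have "norm (elem_inverse (1 - a1) - 1) \<le> 2 * norm a1"
    using norm_a k norm_ge_zero[of a1]
    by (intro order_trans[OF neumann_series(2) divide_one_minus_le_double]) auto
  then have "norm (elem_inverse (1 - a2) - 1) \<le> 9/10"
    using near12 norm_a k norm_triangle_ineq[of "elem_inverse (1 - a2) - elem_inverse (1 - a1)"
        "elem_inverse (1 - a1) - 1"] by simp
  then have "norm a2 \<le> 9" using norm_le_of_elem_inverse_one_minus_near[OF inv2] by fastforce
  then show False using norm_a k by simp
qed

lemma norm_le_spectral_bound_self_adjoint:
  fixes h :: "'a::unital_cstar_algebra"
  assumes sa: "adj h = h" and \<rho>: "0 \<le> \<rho>" and spec: "\<And>z. z \<in> cspectrum h \<Longrightarrow> cmod z \<le> \<rho>"
  shows "norm h \<le> \<rho>"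
proof (rule ccontr)
  assume "\<not> norm h \<le> \<rho>"
  define R where "R = 2 / (norm h + \<rho>)"
  have R: "0 < R" "\<rho> < 1 / R" "1 < R * norm h"
    unfolding R_def using \<open>\<not> norm h \<le> \<rho>\<close> \<rho> by (auto simp: field_simps)
  have "invertible_elem (1 - scaleC \<mu> h)" if "cmod \<mu> \<le> R" for \<mu>
  proof (cases "\<mu> = 0")
    case True
    then show ?thesis by (simp add: invertible_elemI[of 1 1])
  next
    case False
    have "1 / R \<le> cmod (1 / \<mu>)" using that False R by (simp add: norm_divide field_simps)
    then have "invertible_elem (h - scaleC (1 / \<mu>) 1)"
      using spec R unfolding cspectrum_def by force
    moreover have "1 - scaleC \<mu> h = scaleC (- \<mu>) (h - scaleC (1 / \<mu>) 1)"
      using False by (simp add: scaleC_diff_right scaleC_scaleC scaleC_minus_left)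
    ultimately show ?thesis using False by (simp add: invertible_elem_scaleC)
  qed
  then have "R * norm h \<le> 1" by (rule norm_le_of_invertible_one_minus_disc[OF sa R(1)])
  then show False using R by simp
qed

section \<open>Positive elements\<close>

lemma cpositive_self_adjoint: "cpositive a \<Longrightarrow> adj a = a"
  unfolding cpositive_def by simp

lemma cspectrum_cpositive: "cpositive a \<Longrightarrow> z \<in> cspectrum a \<Longrightarrow> \<exists>r\<ge>0. z = complex_of_real r"
  unfolding cpositive_def by auto

lemma norm_norm_one_diff_cpositive:
  fixes a :: "'a::unital_cstar_algebra"
  assumes a: "cpositive a"
  shows "norm (scaleR (norm a) 1 - a) \<le> norm a"
proof (rule norm_le_spectral_bound_self_adjoint)
  show "adj (scaleR (norm a) 1 - a) = scaleR (norm a) 1 - a"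
    using cpositive_self_adjoint[OF a] by (simp add: adj_diff adj_scaleR)
  fix z assume "z \<in> cspectrum (scaleR (norm a) 1 - a)"
  then have z: "complex_of_real (norm a) - z \<in> cspectrum a"
    by (simp add: cspectrum_scaleR_one_diff_iff)
  then obtain r where r: "r \<ge> 0" "complex_of_real (norm a) - z = complex_of_real r"
    using cspectrum_cpositive[OF a] by blast
  have "r \<le> norm a" using cspectrum_norm_bound[OF z] r by simp
  moreover have "z = complex_of_real (norm a - r)" using r by (simp add: algebra_simps)
  then have "cmod z = \<bar>norm a - r\<bar>" by (simp only: norm_of_real)
  ultimately show "cmod z \<le> norm a" using r by simp
qed simp

lemma cpositiveI_norm_one_diff:
  fixes c :: "'a::unital_cstar_algebra"
  assumes sa: "adj c = c" and le: "norm (scaleR u 1 - c) \<le> u"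
  shows "cpositive c"
  unfolding cpositive_def
proof (intro conjI sa subsetI)
  fix z assume z: "z \<in> cspectrum c"
  have z_real: "z = complex_of_real (Re z)"
    using cspectrum_self_adjoint_real[OF sa z] by (simp add: complex_eq_iff)
  have "complex_of_real u - z \<in> cspectrum (scaleR u 1 - c)"
    using z by (simp add: cspectrum_scaleR_one_diff_iff)
  then have "cmod (complex_of_real u - z) \<le> u" using le by (rule order_trans[OF cspectrum_norm_bound])
  then have "cmod (complex_of_real (u - Re z)) \<le> u" by (subst (asm) z_real) simp
  then have "\<bar>u - Re z\<bar> \<le> u" by (simp only: norm_of_real)
  then have "0 \<le> Re z" by linarith
  then show "z \<in> complex_of_real ` {0..}" using z_real by force
qed

lemma cpositive_add:
  fixes a b :: "'a::unital_cstar_algebra"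
  assumes a: "cpositive a" and b: "cpositive b"
  shows "cpositive (a + b)"
proof (rule cpositiveI_norm_one_diff)
  show "adj (a + b) = a + b"
    using cpositive_self_adjoint[OF a] cpositive_self_adjoint[OF b] by (simp add: adj_add)
  have "scaleR (norm a + norm b) 1 - (a + b) = (scaleR (norm a) 1 - a) + (scaleR (norm b) 1 - b)"
    by (simp add: algebra_simps scaleR_add_left)
  then have "norm (scaleR (norm a + norm b) 1 - (a + b))
      \<le> norm (scaleR (norm a) 1 - a) + norm (scaleR (norm b) 1 - b)"
    by (metis norm_triangle_ineq)
  also have "\<dots> \<le> norm a + norm b"
    using norm_norm_one_diff_cpositive[OF a] norm_norm_one_diff_cpositive[OF b] by (rule add_mono)
  finally show "norm (scaleR (norm a + norm b) 1 - (a + b)) \<le> norm a + norm b" .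
qed

text \<open>
  With \<open>t = \<parallel>b\<parallel>\<close> we get \<open>a \<preceq> b \<preceq> t\<close>, so the spectrum of \<open>a\<close> lies in \<open>[0, t]\<close>.
\<close>
lemma norm_mono_cpositive:
  fixes a b :: "'a::unital_cstar_algebra"
  assumes a: "cpositive a" and ab: "a \<preceq>\<^sub>C b"
  shows "norm a \<le> norm b"
proof (rule norm_le_spectral_bound_self_adjoint)
  have ba: "cpositive (b - a)" using ab unfolding cle_def .
  have b: "cpositive b" using cpositive_add[OF a ba] by simp
  have "cpositive (scaleR (norm b) 1 - b)"
    using cpositive_self_adjoint[OF b]
    by (intro cpositiveI_norm_one_diff[where u = "norm b"]) (simp_all add: adj_diff adj_scaleR)
  then have "cpositive (scaleR (norm b) 1 - b + (b - a))" using ba by (rule cpositive_add)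
  then have ta: "cpositive (scaleR (norm b) 1 - a)" by simp
  show "adj a = a" by (rule cpositive_self_adjoint[OF a])
  fix z assume z: "z \<in> cspectrum a"
  obtain r where r: "r \<ge> 0" "z = complex_of_real r" using cspectrum_cpositive[OF a z] by blast
  have "complex_of_real (norm b) - z \<in> cspectrum (scaleR (norm b) 1 - a)"
    using z by (simp add: cspectrum_scaleR_one_diff_iff)
  then obtain s where "s \<ge> 0" "complex_of_real (norm b) - z = complex_of_real s"
    using cspectrum_cpositive[OF ta] by blast
  then have "norm b - r = s" using r by (metis of_real_diff of_real_eq_iff)
  then show "cmod z \<le> norm b" using r \<open>s \<ge> 0\<close> by simp
qed simp

lemma norm_le_adj_power_mult_power:
  fixes a b q :: "'a::unital_cstar_algebra"
  assumes a: "cpositive a" and le: "a \<preceq>\<^sub>C adj q ^ n * b * q ^ n"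
  shows "norm a \<le> norm b * (norm q ^ 2) ^ n"
proof -
  have "norm a \<le> norm (adj q ^ n * b * q ^ n)" by (rule norm_mono_cpositive[OF a le])
  also have "\<dots> \<le> norm (adj q ^ n) * norm b * norm (q ^ n)"
    by (rule order_trans[OF norm_mult_ineq mult_right_mono[OF norm_mult_ineq norm_ge_zero]])
  also have "\<dots> \<le> norm q ^ n * norm b * norm q ^ n"
    using norm_power_ineq[of "adj q" n] norm_power_ineq[of q n]
    by (intro mult_mono mult_right_mono) (simp_all add: norm_adj)
  also have "\<dots> = norm b * (norm q ^ 2) ^ n"
    by (simp only: power2_eq_square power_mult_distrib mult_ac)
  finally show ?thesis .
qed

lemma norm_cstar_metric_eq_0_iff: "cstar_metric d \<Longrightarrow> norm (d x y) = 0 \<longleftrightarrow> x = y"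
  unfolding cstar_metric_def by simp

lemma norm_cstar_metric_commute: "cstar_metric d \<Longrightarrow> norm (d x y) = norm (d y x)"
  unfolding cstar_metric_def by metis

lemma norm_cstar_metric_triangle:
  assumes "cstar_metric d"
  shows "norm (d x y) \<le> norm (d x z) + norm (d z y)"
proof -
  have "norm (d x y) \<le> norm (d x z + d z y)"
    using assms unfolding cstar_metric_def by (blast intro: norm_mono_cpositive)
  then show ?thesis using norm_triangle_ineq order_trans by blast
qed

lemma cconverges_unique:
  assumes metric: "cstar_metric d" and u: "cconverges d s u" and v: "cconverges d s v"
  shows "u = v"
proof -
  have "(\<lambda>n. norm (d (s n) u) + norm (d (s n) v)) \<longlonglongrightarrow> 0 + 0"
    using u v unfolding cconverges_def by (rule tendsto_add)
  moreover have "norm (d u v) \<le> norm (d (s n) u) + norm (d (s n) v)" for n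
    using norm_cstar_metric_triangle[OF metric, of u v "s n"] norm_cstar_metric_commute[OF metric]
    by simp
  ultimately have "norm (d u v) \<le> 0" using LIMSEQ_le_const by fastforce
  then show ?thesis using norm_cstar_metric_eq_0_iff[OF metric] by (simp add: order_antisym)
qed

lemma cconverges_subseq:
  "cconverges d s u \<Longrightarrow> strict_mono r \<Longrightarrow> cconverges d (\<lambda>i. s (r i)) u"
  unfolding cconverges_def by (drule LIMSEQ_subseq_LIMSEQ) (simp_all add: comp_def)

lemma ccauchy_geometric:
  assumes metric: "cstar_metric d" and k: "0 \<le> k" "k < 1"
    and step: "\<And>n. norm (d (s n) (s (Suc n))) \<le> C * k ^ n"
  shows "ccauchy d s"
proof -
  have tail: "norm (d (s n) (s m)) \<le> C / (1 - k) * (k ^ n - k ^ m)" if "n \<le> m" for n m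
    using that
  proof (induction m rule: dec_induct)
    case base
    then show ?case using norm_cstar_metric_eq_0_iff[OF metric] by simp
  next
    case (step m)
    have "norm (d (s n) (s (Suc m))) \<le> norm (d (s n) (s m)) + norm (d (s m) (s (Suc m)))"
      by (rule norm_cstar_metric_triangle[OF metric])
    also have "\<dots> \<le> C / (1 - k) * (k ^ n - k ^ m) + C * k ^ m" using step.IH assms(4) by (rule add_mono)
    also have "\<dots> = C / (1 - k) * (k ^ n - k ^ Suc m)" using k by (simp add: field_simps)
    finally show ?case .
  qed
  have C: "0 \<le> C" using order_trans[OF norm_ge_zero step[of 0]] by simp
  have bound: "norm (d (s n) (s m)) \<le> C / (1 - k) * k ^ n" if "n \<le> m" for n m
    using tail[OF that] mult_left_mono[of "k ^ n - k ^ m" "k ^ n" "C / (1 - k)"] C k by simp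
  have "(\<lambda>n. C / (1 - k) * k ^ n) \<longlonglongrightarrow> 0"
    using k by (intro tendsto_mult_right_zero LIMSEQ_power_zero) simp
  show ?thesis unfolding ccauchy_def
  proof (intro allI impI)
    fix e :: real assume "0 < e"
    then obtain N where N: "\<And>n. n \<ge> N \<Longrightarrow> C / (1 - k) * k ^ n < e"
      using order_tendstoD(2)[OF \<open>(\<lambda>n. C / (1 - k) * k ^ n) \<longlonglongrightarrow> 0\<close>]
      unfolding eventually_sequentially by blast
    have "norm (d (s n) (s m)) < e" if "n \<ge> N" "m \<ge> N" for n m
      using bound[of n m] bound[of m n] N[OF that(1)] N[OF that(2)]
        norm_cstar_metric_commute[OF metric, of "s n" "s m"] by linarith
    then show "\<exists>N. \<forall>n\<ge>N. \<forall>m\<ge>N. norm (d (s n) (s m)) < e" by blast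
  qed
qed

section \<open>Self-maps with geometrically shrinking orbits\<close>

lemma funpow_fixpoint: "T u = u \<Longrightarrow> (T ^^ n) u = u"
  by (induction n) auto

locale geometric_orbit_contraction =
  fixes d :: "'x \<Rightarrow> 'x \<Rightarrow> 'a::unital_cstar_algebra" and T :: "'x \<Rightarrow> 'x"
    and C k :: "'x \<Rightarrow> 'x \<Rightarrow> real"
  assumes metric: "cstar_metric d"
    and k_nonneg: "0 \<le> k x y" and k_less_1: "k x y < 1"
    and orbit_bound: "n \<ge> 1 \<Longrightarrow> norm (d ((T ^^ n) x) ((T ^^ n) y)) \<le> C x y * k x y ^ n"
begin

lemma orbit_dist_tendsto_0: "(\<lambda>n. norm (d ((T ^^ n) x) ((T ^^ n) y))) \<longlonglongrightarrow> 0"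
proof (rule tendsto_sandwich[OF _ _ tendsto_const])
  show "\<forall>\<^sub>F n in sequentially. 0 \<le> norm (d ((T ^^ n) x) ((T ^^ n) y))" by simp
  show "\<forall>\<^sub>F n in sequentially. norm (d ((T ^^ n) x) ((T ^^ n) y)) \<le> C x y * k x y ^ n"
    using orbit_bound unfolding eventually_sequentially by blast
  show "(\<lambda>n. C x y * k x y ^ n) \<longlonglongrightarrow> 0"
    using k_nonneg k_less_1 by (intro tendsto_mult_right_zero LIMSEQ_power_zero) simp
qed

lemma fixpoint_unique:
  assumes "T u = u" and "T v = v"
  shows "u = v"
proof -
  have "(\<lambda>n. norm (d u v)) \<longlonglongrightarrow> 0"
    using orbit_dist_tendsto_0[of u v] by (simp add: funpow_fixpoint assms)
  then show ?thesis using metric by (simp add: LIMSEQ_const_iff cstar_metric_def)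
qed

lemma orbit_cconverges_fixpoint: "T u = u \<Longrightarrow> cconverges d (\<lambda>n. (T ^^ n) x) u"
  using orbit_dist_tendsto_0[of x u] unfolding cconverges_def by (simp add: funpow_fixpoint)

lemma orbit_ccauchy: "ccauchy d (\<lambda>n. (T ^^ n) x)"
proof (rule ccauchy_geometric[OF metric k_nonneg k_less_1])
  fix n
  define B where "B = max (C x (T x)) (norm (d x (T x)))"
  show "norm (d ((T ^^ n) x) ((T ^^ Suc n) x)) \<le> B * k x (T x) ^ n"
  proof (cases "n = 0")
    case False
    have "norm (d ((T ^^ n) x) ((T ^^ Suc n) x)) \<le> C x (T x) * k x (T x) ^ n"
      using orbit_bound[of n x "T x"] False by (simp add: funpow_swap1)
    also have "\<dots> \<le> B * k x (T x) ^ n"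
      unfolding B_def using k_nonneg by (intro mult_right_mono) auto
    finally show ?thesis .
  qed (simp add: B_def)
qed

lemma fixpoint_if_orbitally_continuous:
  assumes complete: "ccomplete d" and oc: "orbitally_continuous d T"
  shows "\<exists>u. T u = u"
proof -
  fix x
  obtain u where u: "cconverges d (\<lambda>n. (T ^^ n) x) u"
    using complete orbit_ccauchy unfolding ccomplete_def by blast
  have "\<And>ns. strict_mono ns \<Longrightarrow> cconverges d (\<lambda>i. (T ^^ ns i) x) u \<Longrightarrow>
      cconverges d (\<lambda>i. (T ^^ (ns i + 1)) x) (T u)"
    using oc unfolding orbitally_continuous_def orbitally_continuous_at_def by blast
  from this[of "\<lambda>n. n"] u have "cconverges d (\<lambda>n. (T ^^ Suc n) x) (T u)"
    by (simp add: strict_mono_def)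
  moreover have "cconverges d (\<lambda>n. (T ^^ Suc n) x) u"
    using u unfolding cconverges_def by (rule LIMSEQ_Suc)
  ultimately show ?thesis using cconverges_unique[OF metric] by blast
qed

lemma orbitally_continuous_if_fixpoint:
  assumes u: "T u = u"
  shows "orbitally_continuous d T"
  unfolding orbitally_continuous_def orbitally_continuous_at_def
proof (intro allI impI)
  fix w x and ns :: "nat \<Rightarrow> nat"
  assume ns: "strict_mono ns" and w: "cconverges d (\<lambda>i. (T ^^ ns i) x) w"
  note orbit = orbit_cconverges_fixpoint[OF u, of x]
  have "strict_mono (\<lambda>i. ns i + 1)" using ns by (simp add: strict_mono_def)
  from cconverges_subseq[OF orbit this] have "cconverges d (\<lambda>i. (T ^^ (ns i + 1)) x) u" .
  moreover have "w = u" by (rule cconverges_unique[OF metric w cconverges_subseq[OF orbit ns]])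
  ultimately show "cconverges d (\<lambda>i. (T ^^ (ns i + 1)) x) (T w)" using u by simp
qed

end

theorem theorem3p6:
  fixes d :: "'x \<Rightarrow> 'x \<Rightarrow> 'a::unital_cstar_algebra"
    and T :: "'x \<Rightarrow> 'x"
    and q :: "'x \<Rightarrow> 'x \<Rightarrow> 'a"
    and \<delta> :: "'x \<Rightarrow> 'x \<Rightarrow> 'a"
  assumes metric: "cstar_metric d"
    and complete: "ccomplete d"
    and q_norm: "\<And>x y. norm (q x y) < 1"
    and \<delta>_pos: "\<And>x y. cpositive (\<delta> x y)"
    and contr: "\<And>x y n. n \<ge> 1 \<Longrightarrow>
         d ((T ^^ n) x) ((T ^^ n) y) \<preceq>\<^sub>C (adj (q x y)) ^ n * \<delta> x y * (q x y) ^ n"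
  shows "orbitally_continuous d T \<longleftrightarrow> (\<exists>!u. T u = u)"
proof -
  interpret geometric_orbit_contraction d T "\<lambda>x y. norm (\<delta> x y)" "\<lambda>x y. norm (q x y) ^ 2"
  proof unfold_locales
    show "cstar_metric d" by (fact metric)
    show "0 \<le> norm (q x y) ^ 2" and "norm (q x y) ^ 2 < 1" for x y
      using q_norm[of x y] by (simp_all add: power_less_one_iff)
    show "norm (d ((T ^^ n) x) ((T ^^ n) y)) \<le> norm (\<delta> x y) * (norm (q x y) ^ 2) ^ n"
      if "n \<ge> 1" for n x y
      using metric norm_le_adj_power_mult_power[OF _ contr[OF that]] unfolding cstar_metric_def by blast
  qed
  show ?thesis
    using fixpoint_if_orbitally_continuous[OF complete] orbitally_continuous_if_fixpoint
      fixpoint_unique by blast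
qed

end
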